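(* Let $d\ge 2$, $p=d-1$, $\lambda>0$, $u>0$, let $\mathbf N\sim\mathrm{NDFHL}^{(d)}(\lambda,u)$, and for $P>0$ let $\mathbf X\sim\mathcal N(\mathbf 0,\frac Pp\mathbf I_p)$ be independent of $\mathbf N$ and $\mathbf Y=\mathbf X+\mathbf N$. Then $$I(\mathbf X;\mathbf Y)\ge\frac p2\log P+O(1),\qquad P\to\infty,$$ i.e. there is a constant $c$ (independent of $P$) such that $I(\mathbf X;\mathbf Y)\ge \frac p2\log P-c$ for all sufficiently large $P$.
   Context: For an integer $d\ge2$, $p=d-1$, $\lambda>0$, $u>0$, the distribution $\mathrm{NDFHL}^{(d)}(\lambda,u)$ is the probability law on $\mathbb R^{p}$ with density $$f_{\mathbf N}(\mathbf n)=\frac{\lambda}{2^{\frac d2-1}\pi^{\frac d2}}\left(\frac{u}{\rho(\mathbf n)}\right)^{\frac d2}e^{\lambda u}K_{\frac d2}\bigl(u\rho(\mathbf n)\bigr),\qquad \rho(\mathbf n)=\sqrt{\|\mathbf n\|^2+\lambda^2},$$ where $K_\nu$ is the modified Bessel function of the second kind. Equivalently, it is the law of $\sigma\sqrt{T}\,\mathbf Z$ where $\sigma>0$, $\mathbf Z\sim\mathcal N(\mathbf 0,\mathbf I_p)$ is independent of $T$, and $T$ is inverse Gaussian with mean $\lambda/(u\sigma^2)$ and shape parameter $\lambda^2/\sigma^2$. Logarithms are natural. *)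

theory Defs
  imports "HOL-Probability.Probability"
begin

text \<open>Modified Bessel function of the second kind, via its standard integral
representation K_nu(x) = int_0^infty exp(-x cosh t) cosh(nu t) dt  (x > 0).\<close>
definition besselK :: "real \<Rightarrow> real \<Rightarrow> real" where
  "besselK \<nu> x = integral {0..} (\<lambda>t. exp (- x * cosh t) * cosh (\<nu> * t))"

text \<open>Density of NDFHL^(d)(lambda,u) on R^p, p = d - 1 = CARD('n).\<close>
definition ndfhl_density :: "nat \<Rightarrow> real \<Rightarrow> real \<Rightarrow> real^'n \<Rightarrow> real" where
  "ndfhl_density d lam u n =
     (let \<rho> = sqrt ((norm n)\<^sup>2 + lam\<^sup>2) in
      lam / (2 powr (real d / 2 - 1) * pi powr (real d / 2))
        * (u / \<rho>) powr (real d / 2) * exp (lam * u) * besselK (real d / 2) (u * \<rho>))"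

definition gauss_density :: "real \<Rightarrow> real^'n \<Rightarrow> real" where
  "gauss_density v x = (\<Prod>i\<in>UNIV. normal_density 0 (sqrt v) (x $ i))"

end

theory Submission
  imports Defs
begin

text \<open>
  Write v = P/p and Y = X + N. Gibbs' inequality ln t <= t - 1, applied with the auxiliary
  kernel q(x | y) = phi(x - y) (phi the standard normal density on R^p), gives
    I(X;Y) >= E ln q(X | Y) - E ln f_X(X) >= (p/2) ln v - E|N|^2/2,
  because ln q(X | Y) = -|N|^2/2 - (p/2) ln (2 pi) and f_X <= (2 pi v)^(-p/2).
  From K_nu(x) <= exp((nu+1)^2/x - x) the NDFHL density decays like exp(-u |n|), so E|N|^2
  is finite and independent of P.

  The mutual information is a Bochner integral, which is 0 for a non-integrable integrand, so
  the information density has to be shown integrable. This is where P must be large: for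
  v > 2 E|N|^2 the output density is at least exp(-|y|^2/v) / (2 (2 pi v)^(p/2)), which bounds
  the information density above by an integrable function.
\<close>

section \<open>Integrals over Euclidean spaces\<close>

lemma nn_integral_lborel_vec_prod:
  fixes g :: "real \<Rightarrow> real"
  assumes [measurable]: "g \<in> borel_measurable borel"
  shows "(\<integral>\<^sup>+x. (\<Prod>i\<in>UNIV. ennreal (g (x $ i))) \<partial>(lborel :: (real^'n) measure))
    = (\<integral>\<^sup>+t. g t \<partial>lborel) ^ CARD('n)"
proof -
  have Basis: "(Basis :: (real^'n) set) = range (\<lambda>i. axis i 1)"
    by (auto simp: Basis_vec_def)
  have "(\<lambda>x::real^'n. \<Prod>b\<in>Basis. ennreal (g (x \<bullet> b))) = (\<lambda>x. \<Prod>i\<in>UNIV. ennreal (g (x $ i)))"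
    unfolding Basis
    by (subst prod.reindex) (auto simp: inj_on_def axis_eq_axis cart_eq_inner_axis inner_commute)
  moreover have "(\<integral>\<^sup>+x. (\<Prod>b\<in>(Basis :: (real^'n) set). ennreal (g (x \<bullet> b))) \<partial>lborel)
      = (\<Prod>b\<in>(Basis :: (real^'n) set). \<integral>\<^sup>+t. ennreal (g t) \<partial>lborel)"
    by (rule nn_integral_lborel_prod) auto
  ultimately show ?thesis
    by (simp add: prod_constant)
qed

lemma nn_integral_lborel_add:
  fixes f :: "'a::euclidean_space \<Rightarrow> ennreal"
  assumes [measurable]: "f \<in> borel_measurable borel"
  shows "(\<integral>\<^sup>+x. f (c + x) \<partial>lborel) = (\<integral>\<^sup>+x. f x \<partial>lborel)"
  by (subst (2) lborel_distr_plus[of c, symmetric]) (simp add: nn_integral_distr)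

lemma nn_integral_lborel_minus:
  fixes f :: "'a::euclidean_space \<Rightarrow> ennreal"
  assumes [measurable]: "f \<in> borel_measurable borel"
  shows "(\<integral>\<^sup>+x. f (c - x) \<partial>lborel) = (\<integral>\<^sup>+x. f x \<partial>lborel)"
proof -
  have "lborel = density (distr lborel borel ((-) c)) (\<lambda>_. 1)"
    using lborel_affine[of "-1::real" c] by simp
  then have "(\<integral>\<^sup>+x. f x \<partial>lborel) = (\<integral>\<^sup>+x. f x \<partial>density (distr lborel borel ((-) c)) (\<lambda>_. 1))"
    by simp
  then show ?thesis
    by (simp add: nn_integral_density nn_integral_distr)
qed

lemma nn_integral_exp_neg_abs_finite:
  fixes b :: real
  assumes b: "0 < b"
  shows "(\<integral>\<^sup>+t. ennreal (exp (- b * \<bar>t\<bar>)) \<partial>lborel) < \<infinity>"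
proof -
  have total: "(\<integral>\<^sup>+t. ennreal (exponential_density b t) \<partial>lborel) = 1"
  proof -
    interpret prob_space "density lborel (exponential_density b)"
      using b by (rule prob_space_exponential_density)
    show ?thesis
      using emeasure_space_1 by (simp add: emeasure_density)
  qed
  have "(\<integral>\<^sup>+t. ennreal (exp (- b * \<bar>t\<bar>)) \<partial>lborel)
      \<le> (\<integral>\<^sup>+t. ennreal (1/b) * ennreal (exponential_density b t)
                + ennreal (1/b) * ennreal (exponential_density b (- t)) \<partial>lborel)"
  proof (intro nn_integral_mono)
    fix t :: real
    have "exp (- b * \<bar>t\<bar>) \<le> 1/b * exponential_density b t + 1/b * exponential_density b (- t)"
      using b by (cases "t < 0") (auto simp: exponential_density_def)
    then show "ennreal (exp (- b * \<bar>t\<bar>))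
        \<le> ennreal (1/b) * ennreal (exponential_density b t) + ennreal (1/b) * ennreal (exponential_density b (- t))"
      using b by (simp add: ennreal_mult'[symmetric] ennreal_plus[symmetric] exponential_density_nonneg del: ennreal_plus)
  qed
  also have "\<dots> = ennreal (1/b) + ennreal (1/b)"
    using nn_integral_lborel_minus[of "\<lambda>t. ennreal (exponential_density b t)" 0]
    by (simp add: nn_integral_add nn_integral_cmult total)
  finally show ?thesis
    by (simp add: le_less_trans)
qed

lemma integrable_exp_neg_norm:
  fixes a :: real
  assumes a: "0 < a"
  shows "integrable (lborel :: (real^'n) measure) (\<lambda>x. exp (- a * norm x))"
proof (subst integrable_iff_bounded, safe)
  define b where "b = a / real CARD('n)"
  have b: "0 < b"
    using a by (simp add: b_def)
  have "(\<integral>\<^sup>+x. ennreal (norm (exp (- a * norm (x::real^'n)))) \<partial>lborel)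
      \<le> (\<integral>\<^sup>+x. (\<Prod>i\<in>UNIV. ennreal (exp (- b * \<bar>(x::real^'n) $ i\<bar>))) \<partial>lborel)"
  proof (rule nn_integral_mono)
    fix x :: "real^'n"
    have "b * (\<Sum>i\<in>UNIV. \<bar>x $ i\<bar>) \<le> b * (\<Sum>i\<in>(UNIV::'n set). norm x)"
      using b by (intro mult_left_mono sum_mono) (auto simp: component_le_norm_cart)
    then have "exp (- a * norm x) \<le> exp (- b * (\<Sum>i\<in>UNIV. \<bar>x $ i\<bar>))"
      by (simp add: b_def)
    then show "ennreal (norm (exp (- a * norm x))) \<le> (\<Prod>i\<in>UNIV. ennreal (exp (- b * \<bar>x $ i\<bar>)))"
      by (simp add: prod_ennreal exp_sum[symmetric] sum_distrib_left sum_negf)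
  qed
  also have "\<dots> = (\<integral>\<^sup>+t. exp (- b * \<bar>t\<bar>) \<partial>lborel) ^ CARD('n)"
    by (rule nn_integral_lborel_vec_prod) simp
  also have "\<dots> < \<infinity>"
    using nn_integral_exp_neg_abs_finite[OF b] by (simp add: power_less_top_ennreal)
  finally show "(\<integral>\<^sup>+x. ennreal (norm (exp (- a * norm (x::real^'n)))) \<partial>lborel) < \<infinity>" .
qed simp

lemma sq_mult_exp_neg_le:
  fixes s u :: real
  assumes u: "0 < u" and s: "0 \<le> s"
  shows "s\<^sup>2 * exp (- u * s) \<le> 8 / u\<^sup>2 * exp (- (u/2) * s)"
proof -
  have "1 + u * s/2 + (u * s/2)\<^sup>2/2 \<le> exp (u * s/2)"
    using u s by (intro exp_lower_Taylor_quadratic) simp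
  moreover have "(u * s/2)\<^sup>2/2 = u\<^sup>2 * s\<^sup>2 / 8"
    by (simp add: power2_eq_square)
  moreover have "0 \<le> u * s/2"
    using u s by simp
  ultimately have "u\<^sup>2 * s\<^sup>2 / 8 \<le> exp (u * s/2)"
    by linarith
  then have "s\<^sup>2 \<le> 8 / u\<^sup>2 * exp (u * s/2)"
    using u by (simp add: field_simps)
  then have "s\<^sup>2 * exp (- u * s) \<le> 8 / u\<^sup>2 * exp (u * s/2) * exp (- u * s)"
    by (rule mult_right_mono) simp
  also have "\<dots> = 8 / u\<^sup>2 * exp (- (u/2) * s)"
    by (simp add: mult_exp_exp)
  finally show ?thesis .
qed

lemma integrable_mult_norm_sq_of_exp_bound:
  fixes f :: "real^'n \<Rightarrow> real"
  assumes [measurable]: "f \<in> borel_measurable borel"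
    and u: "0 < u" and f_nonneg: "\<And>x. 0 \<le> f x" and f_le: "\<And>x. f x \<le> B * exp (- u * norm x)"
  shows "integrable lborel (\<lambda>x. f x * (norm x)\<^sup>2)"
proof (rule Bochner_Integration.integrable_bound)
  show "integrable lborel (\<lambda>x::real^'n. B * (8 / u\<^sup>2) * exp (- (u/2) * norm x))"
    using u by (intro integrable_mult_right integrable_exp_neg_norm) simp
  have B: "0 \<le> B"
    using f_nonneg[of 0] f_le[of 0] by simp
  show "AE x in lborel. norm (f x * (norm x)\<^sup>2) \<le> norm (B * (8 / u\<^sup>2) * exp (- (u/2) * norm x))"
  proof (intro AE_I2)
    fix x :: "real^'n"
    have "f x * (norm x)\<^sup>2 \<le> B * exp (- u * norm x) * (norm x)\<^sup>2"
      using f_le[of x] by (rule mult_right_mono) simp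
    also have "\<dots> = B * ((norm x)\<^sup>2 * exp (- u * norm x))"
      by simp
    also have "\<dots> \<le> B * (8 / u\<^sup>2 * exp (- (u/2) * norm x))"
      using B u by (intro mult_left_mono sq_mult_exp_neg_le) auto
    finally show "norm (f x * (norm x)\<^sup>2) \<le> norm (B * (8 / u\<^sup>2) * exp (- (u/2) * norm x))"
      using f_nonneg[of x] B by simp
  qed
qed measurable

section \<open>Exponential decay of the NDFHL density\<close>

lemma cosh_ge_1_plus_sq:
  fixes t :: real
  assumes "0 \<le> t"
  shows "1 + t\<^sup>2/4 \<le> cosh t"
proof -
  have "1 + t + t\<^sup>2/2 \<le> exp t"
    using assms by (rule exp_lower_Taylor_quadratic)
  moreover have "1 + (-t) \<le> exp (-t)"
    by (rule exp_ge_add_one_self)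
  ultimately show ?thesis
    by (simp add: cosh_field_def field_simps)
qed

lemma cosh_le_exp_abs: "cosh (t::real) \<le> exp \<bar>t\<bar>"
  unfolding cosh_field_def by (cases "t \<ge> 0") auto

lemma besselK_nonneg: "0 \<le> besselK \<nu> x"
  unfolding besselK_def
  by (cases "(\<lambda>t. exp (- x * cosh t) * cosh (\<nu> * t)) integrable_on {0..}")
     (auto intro!: integral_nonneg simp: cosh_real_nonneg not_integrable_integral)

lemma besselK_le_exp:
  assumes x: "0 < x"
  shows "besselK \<nu> x \<le> exp ((\<bar>\<nu>\<bar> + 1)\<^sup>2 / x - x)"
proof -
  define E where "E = exp ((\<bar>\<nu>\<bar> + 1)\<^sup>2 / x - x)"
  have majorant: "((\<lambda>t. E * exp (- 1 * t)) has_integral E) {0..}"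
    using has_integral_mult_right[OF has_integral_exp_minus_to_infinity[of 1 0], of E] by simp
  have bound: "exp (- x * cosh t) * cosh (\<nu> * t) \<le> E * exp (- 1 * t)" if "0 \<le> t" for t
  proof -
    have "exp (- x * cosh t) * cosh (\<nu> * t) \<le> exp (- x * (1 + t\<^sup>2/4)) * exp (\<bar>\<nu>\<bar> * t)"
      using cosh_ge_1_plus_sq[OF that] cosh_le_exp_abs[of "\<nu> * t"] x that
      by (intro mult_mono) (auto simp: abs_mult cosh_real_nonneg)
    also have "\<dots> = exp (- x * (1 + t\<^sup>2/4) + \<bar>\<nu>\<bar> * t)"
      by (simp add: mult_exp_exp algebra_simps)
    also have "\<dots> \<le> exp ((\<bar>\<nu>\<bar> + 1)\<^sup>2 / x - x - t)"
    proof -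
      \<comment> \<open>complete the square in t\<close>
      have "0 \<le> (x * t / 2 - (\<bar>\<nu>\<bar> + 1))\<^sup>2 / x"
        using x by simp
      also have "\<dots> = x * t\<^sup>2/4 - (\<bar>\<nu>\<bar> + 1) * t + (\<bar>\<nu>\<bar> + 1)\<^sup>2 / x"
        using x by (simp add: field_simps power2_eq_square)
      finally show ?thesis
        by (simp add: algebra_simps)
    qed
    also have "\<dots> = E * exp (- 1 * t)"
      by (simp add: E_def exp_diff exp_minus exp_add field_simps)
    finally show ?thesis .
  qed
  show ?thesis
  proof (cases "(\<lambda>t. exp (- x * cosh t) * cosh (\<nu> * t)) integrable_on {0..}")
    case True
    then have "besselK \<nu> x \<le> integral {0..} (\<lambda>t. E * exp (- 1 * t))"
      unfolding besselK_def using majorant bound by (intro integral_le) (auto simp: has_integral_integrable)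
    also have "\<dots> = E"
      using majorant by (rule integral_unique)
    finally show ?thesis
      by (simp add: E_def)
  next
    case False
    then show ?thesis
      unfolding besselK_def by (simp add: not_integrable_integral)
  qed
qed

lemma ndfhl_density_nonneg:
  fixes n :: "real^'n"
  assumes "0 < lam" "0 < u"
  shows "0 \<le> ndfhl_density d lam u n"
  using assms besselK_nonneg by (simp add: ndfhl_density_def Let_def)

lemma ndfhl_density_le_exp:
  assumes lam: "0 < lam" and u: "0 < u"
  obtains B where "\<And>n::real^'n. ndfhl_density d lam u n \<le> B * exp (- u * norm n)"
proof
  define \<nu> where "\<nu> = real d / 2"
  define C where "C = lam / (2 powr (\<nu> - 1) * pi powr \<nu>) * exp (lam * u)"
  have C: "0 < C"
    using lam by (simp add: C_def)
  fix n :: "real^'n"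
  define \<rho> where "\<rho> = sqrt ((norm n)\<^sup>2 + lam\<^sup>2)"
  have lam_le: "lam \<le> \<rho>" and norm_le: "norm n \<le> \<rho>"
    unfolding \<rho>_def using lam by (auto intro: real_le_rsqrt)
  have "ndfhl_density d lam u n = C * ((u / \<rho>) powr \<nu> * besselK \<nu> (u * \<rho>))"
    by (simp add: ndfhl_density_def Let_def C_def \<nu>_def \<rho>_def)
  also have "\<dots> \<le> C * ((u / lam) powr \<nu> * exp ((\<bar>\<nu>\<bar> + 1)\<^sup>2 / (u * lam) - u * norm n))"
  proof (intro mult_left_mono mult_mono)
    show "(u / \<rho>) powr \<nu> \<le> (u / lam) powr \<nu>"
      using u lam lam_le by (intro powr_mono2) (auto simp: \<nu>_def frac_le)
    have "besselK \<nu> (u * \<rho>) \<le> exp ((\<bar>\<nu>\<bar> + 1)\<^sup>2 / (u * \<rho>) - u * \<rho>)"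
      using u lam lam_le by (intro besselK_le_exp) simp
    also have "\<dots> \<le> exp ((\<bar>\<nu>\<bar> + 1)\<^sup>2 / (u * lam) - u * norm n)"
      using u lam lam_le norm_le by (auto intro!: diff_mono divide_left_mono mult_left_mono)
    finally show "besselK \<nu> (u * \<rho>) \<le> exp ((\<bar>\<nu>\<bar> + 1)\<^sup>2 / (u * lam) - u * norm n)" .
  qed (use C besselK_nonneg in auto)
  also have "\<dots> = C * (u / lam) powr \<nu> * exp ((\<bar>\<nu>\<bar> + 1)\<^sup>2 / (u * lam)) * exp (- u * norm n)"
    by (simp add: exp_diff exp_minus field_simps)
  finally show "ndfhl_density d lam u n
      \<le> C * (u / lam) powr \<nu> * exp ((\<bar>\<nu>\<bar> + 1)\<^sup>2 / (u * lam)) * exp (- u * norm n)" .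
qed

lemma ndfhl_density_bounded:
  assumes lam: "0 < lam" and u: "0 < u"
  obtains B where "\<And>n::real^'n. ndfhl_density d lam u n \<le> B"
proof -
  obtain B where B: "\<And>n::real^'n. ndfhl_density d lam u n \<le> B * exp (- u * norm n)"
    using ndfhl_density_le_exp[OF lam u] by blast
  have "0 \<le> B"
    using order.trans[OF ndfhl_density_nonneg[OF lam u, of d 0] B[of 0]] by simp
  then have "ndfhl_density d lam u n \<le> B" for n :: "real^'n"
    using B[of n] u mult_left_le[of "exp (- u * norm n)" B] by simp
  then show ?thesis
    using that by blast
qed

lemma (in prob_space) ndfhl_distributed_second_moment:
  fixes N :: "'a \<Rightarrow> real^'n"
  assumes lam: "0 < lam" and u: "0 < u"
    and N: "distributed M lborel N (\<lambda>n. ennreal (ndfhl_density d lam u n))"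
  shows "integrable M (\<lambda>\<omega>. (norm (N \<omega>))\<^sup>2)"
    and "expectation (\<lambda>\<omega>. (norm (N \<omega>))\<^sup>2) = (\<integral>n. ndfhl_density d lam u (n::real^'n) * (norm n)\<^sup>2 \<partial>lborel)"
proof -
  obtain B where "\<And>n::real^'n. ndfhl_density d lam u n \<le> B * exp (- u * norm n)"
    using ndfhl_density_le_exp[OF lam u] by blast
  then have "integrable lborel (\<lambda>n::real^'n. ndfhl_density d lam u n * (norm n)\<^sup>2)"
    using distributed_real_measurable[OF _ N] ndfhl_density_nonneg[OF lam u] u
    by (intro integrable_mult_norm_sq_of_exp_bound[where u = u and B = B]) auto
  then show "integrable M (\<lambda>\<omega>. (norm (N \<omega>))\<^sup>2)"
    using distributed_integrable[OF N, of "\<lambda>n. (norm n)\<^sup>2"] ndfhl_density_nonneg[OF lam u, where 'n='n]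
    by simp
  show "expectation (\<lambda>\<omega>. (norm (N \<omega>))\<^sup>2) = (\<integral>n. ndfhl_density d lam u (n::real^'n) * (norm n)\<^sup>2 \<partial>lborel)"
    using distributed_integral[OF N, of "\<lambda>n. (norm n)\<^sup>2"] ndfhl_density_nonneg[OF lam u, where 'n='n]
    by simp
qed

section \<open>Isotropic Gaussian densities\<close>

lemma gauss_density_eq:
  fixes x :: "real^'n"
  assumes v: "0 < v"
  shows "gauss_density v x = exp (- (norm x)\<^sup>2 / (2 * v)) / sqrt (2 * pi * v) ^ CARD('n)"
proof -
  have "gauss_density v x = (\<Prod>i\<in>UNIV. exp (- (x $ i)\<^sup>2 / (2 * v)) / sqrt (2 * pi * v))"
    unfolding gauss_density_def normal_density_def using v by (intro prod.cong) auto
  also have "\<dots> = exp (- (\<Sum>i\<in>UNIV. (x $ i)\<^sup>2) / (2 * v)) / sqrt (2 * pi * v) ^ CARD('n)"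
    by (simp add: prod_dividef exp_sum[symmetric] sum_divide_distrib sum_negf)
  also have "(\<Sum>i\<in>UNIV. (x $ i)\<^sup>2) = (norm x)\<^sup>2"
    by (simp add: norm_vec_def L2_set_def sum_nonneg)
  finally show ?thesis .
qed

lemma gauss_density_nonneg[simp]: "0 \<le> gauss_density v x"
  by (simp add: gauss_density_def prod_nonneg)

lemma gauss_density_pos: "0 < v \<Longrightarrow> 0 < gauss_density v x"
  by (simp add: gauss_density_eq)

lemma gauss_density_le: "0 < v \<Longrightarrow> gauss_density v (x::real^'n) \<le> 1 / sqrt (2 * pi * v) ^ CARD('n)"
  by (simp add: gauss_density_eq divide_right_mono)

lemma borel_measurable_gauss_density[measurable]:
  "gauss_density v \<in> borel_measurable (borel :: (real^'n) measure)"
  unfolding gauss_density_def[abs_def] by measurable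

lemma nn_integral_gauss_density:
  assumes "0 < v"
  shows "(\<integral>\<^sup>+x. ennreal (gauss_density v x) \<partial>(lborel :: (real^'n) measure)) = 1"
proof -
  have "(\<integral>\<^sup>+t. ennreal (normal_density 0 (sqrt v) t) \<partial>lborel) = 1"
    using assms by (subst nn_integral_eq_integral) auto
  then show ?thesis
    unfolding gauss_density_def by (simp add: prod_ennreal[symmetric] nn_integral_lborel_vec_prod)
qed

lemma integrable_gauss_density: "0 < v \<Longrightarrow> integrable (lborel :: (real^'n) measure) (gauss_density v)"
  by (subst integrable_iff_bounded)
     (auto simp: gauss_density_def prod_nonneg nn_integral_gauss_density[unfolded gauss_density_def])

lemma integrable_gauss_density_mult_norm_sq:
  assumes v: "0 < v"
  shows "integrable (lborel :: (real^'n) measure) (\<lambda>x. gauss_density v x * (norm x)\<^sup>2)"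
proof (rule Bochner_Integration.integrable_bound)
  define C where "C = 4 * v * (sqrt (2 * pi * (2 * v)) ^ CARD('n) / sqrt (2 * pi * v) ^ CARD('n))"
  show "integrable (lborel :: (real^'n) measure) (\<lambda>x. C * gauss_density (2 * v) x)"
    using v by (intro integrable_mult_right integrable_gauss_density) simp
  show "AE x in lborel. norm (gauss_density v x * (norm (x::real^'n))\<^sup>2) \<le> norm (C * gauss_density (2 * v) x)"
  proof (intro AE_I2)
    fix x :: "real^'n"
    define s where "s = (norm x)\<^sup>2"
    have "1 + s / (4 * v) \<le> exp (s / (4 * v))"
      by (rule exp_ge_add_one_self)
    then have "s \<le> 4 * v * exp (s / (4 * v))"
      using v by (simp add: s_def field_simps)
    then have "s * exp (- s / (2 * v)) \<le> 4 * v * exp (s / (4 * v)) * exp (- s / (2 * v))"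
      by (rule mult_right_mono) simp
    also have "\<dots> = 4 * v * exp (- s / (2 * (2 * v)))"
      using v by (simp add: mult_exp_exp)
    finally have "s * exp (- s / (2 * v)) \<le> 4 * v * exp (- s / (2 * (2 * v)))" .
    then have "s * exp (- s / (2 * v)) / sqrt (2 * pi * v) ^ CARD('n)
        \<le> 4 * v * exp (- s / (2 * (2 * v))) / sqrt (2 * pi * v) ^ CARD('n)"
      using v by (intro divide_right_mono) auto
    then have "gauss_density v x * (norm x)\<^sup>2 \<le> C * gauss_density (2 * v) x"
      using v by (simp add: gauss_density_eq C_def s_def mult.commute mult.left_commute)
    then show "norm (gauss_density v x * (norm x)\<^sup>2) \<le> norm (C * gauss_density (2 * v) x)"
      using v gauss_density_pos[OF v, of x] by simp
  qed
qed simp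

lemma ln_gauss_density_le:
  assumes v: "0 < v"
  shows "ln (gauss_density v (x::real^'n)) \<le> - real CARD('n) / 2 * (ln (2 * pi) + ln v)"
proof -
  have "ln (gauss_density v x) \<le> ln (1 / sqrt (2 * pi * v) ^ CARD('n))"
    using gauss_density_le[OF v, of x] gauss_density_pos[OF v, of x] v by (subst ln_le_cancel_iff) auto
  also have "\<dots> = - real CARD('n) / 2 * (ln (2 * pi) + ln v)"
    using v by (simp add: ln_div ln_realpow ln_sqrt ln_mult)
  finally show ?thesis .
qed

lemma ln_gauss_density_1:
  "ln (gauss_density 1 (x::real^'n)) = - (norm x)\<^sup>2 / 2 - real CARD('n) / 2 * ln (2 * pi)"
  by (simp add: gauss_density_eq ln_div ln_realpow ln_sqrt)

lemma gauss_density_diff_ge: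
  fixes y n :: "real^'n"
  assumes v: "0 < v"
  shows "exp (- (norm y)\<^sup>2 / v) / sqrt (2 * pi * v) ^ CARD('n) * (1 - (norm n)\<^sup>2 / v)
    \<le> gauss_density v (y - n)"
proof -
  have "(norm (y - n))\<^sup>2 \<le> (norm y + norm n)\<^sup>2"
    using norm_triangle_ineq4[of y n] by (intro power_mono) auto
  also have "\<dots> \<le> 2 * (norm y)\<^sup>2 + 2 * (norm n)\<^sup>2"
    using zero_le_power2[of "norm y - norm n"] by (simp add: power2_eq_square algebra_simps)
  finally have "(norm (y - n))\<^sup>2 \<le> 2 * (norm y)\<^sup>2 + 2 * (norm n)\<^sup>2" .
  then have "(norm (y - n))\<^sup>2 / (2 * v) \<le> (2 * (norm y)\<^sup>2 + 2 * (norm n)\<^sup>2) / (2 * v)"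
    using v by (intro divide_right_mono) auto
  then have "- (norm y)\<^sup>2 / v + - (norm n)\<^sup>2 / v \<le> - (norm (y - n))\<^sup>2 / (2 * v)"
    using v by (simp add: add_divide_distrib)
  then have "exp (- (norm y)\<^sup>2 / v) * exp (- (norm n)\<^sup>2 / v) \<le> exp (- (norm (y - n))\<^sup>2 / (2 * v))"
    by (simp add: mult_exp_exp)
  moreover have "1 - (norm n)\<^sup>2 / v \<le> exp (- (norm n)\<^sup>2 / v)"
    using exp_ge_add_one_self[of "- (norm n)\<^sup>2 / v"] by simp
  ultimately have "exp (- (norm y)\<^sup>2 / v) * (1 - (norm n)\<^sup>2 / v) \<le> exp (- (norm (y - n))\<^sup>2 / (2 * v))"
    by (meson exp_gt_zero mult_left_mono order.trans less_imp_le)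
  then show ?thesis
    using v by (simp add: gauss_density_eq divide_right_mono)
qed

section \<open>Joint densities and mutual information\<close>

lemma distr_lborel_pair_shear:
  "distr (lborel \<Otimes>\<^sub>M lborel) (lborel \<Otimes>\<^sub>M lborel) (\<lambda>z. (fst z, snd z - fst z))
    = (lborel \<Otimes>\<^sub>M lborel :: ('a::euclidean_space \<times> 'a) measure)"
    (is "distr ?L ?L ?T = ?L")
proof (rule measure_eqI)
  fix A assume "A \<in> sets (distr ?L ?L ?T)"
  then have A[measurable]: "A \<in> sets ?L"
    by simp
  have "emeasure (distr ?L ?L ?T) A = emeasure ?L (?T -` A \<inter> space ?L)"
    using A by (intro emeasure_distr) auto
  also have "\<dots> = (\<integral>\<^sup>+z. indicator (?T -` A \<inter> space ?L) z \<partial>?L)"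
    by (rule nn_integral_indicator[symmetric]) measurable
  also have "\<dots> = (\<integral>\<^sup>+z. indicator A (?T z) \<partial>?L)"
    by (auto simp: space_pair_measure intro!: nn_integral_cong split: split_indicator)
  also have "\<dots> = (\<integral>\<^sup>+x. \<integral>\<^sup>+y. indicator A (x, - x + y) \<partial>lborel \<partial>lborel)"
    by (subst lborel.nn_integral_fst[symmetric]) auto
  also have "\<dots> = (\<integral>\<^sup>+x. \<integral>\<^sup>+y. indicator A (x, y) \<partial>lborel \<partial>lborel)"
    by (subst nn_integral_lborel_add) auto
  also have "\<dots> = emeasure ?L A"
    by (rule lborel.emeasure_pair_measure[symmetric, OF A])
  finally show "emeasure (distr ?L ?L ?T) A = emeasure ?L A" .
qed simp

lemma distributed_pair_add:
  fixes X N :: "'a \<Rightarrow> 'b::euclidean_space"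
  assumes XN: "distributed M (lborel \<Otimes>\<^sub>M lborel) (\<lambda>\<omega>. (X \<omega>, N \<omega>)) g"
  shows "distributed M (lborel \<Otimes>\<^sub>M lborel) (\<lambda>\<omega>. (X \<omega>, X \<omega> + N \<omega>)) (\<lambda>z. g (fst z, snd z - fst z))"
proof -
  let ?L = "lborel \<Otimes>\<^sub>M lborel :: ('b \<times> 'b) measure"
  let ?T = "\<lambda>z::'b \<times> 'b. (fst z, fst z + snd z)"
  have [measurable]: "(\<lambda>\<omega>. (X \<omega>, N \<omega>)) \<in> measurable M ?L" "g \<in> borel_measurable ?L"
    using XN by (auto simp: distributed_def)
  have "distr M ?L (\<lambda>\<omega>. (X \<omega>, X \<omega> + N \<omega>)) = distr (distr M ?L (\<lambda>\<omega>. (X \<omega>, N \<omega>))) ?L ?T"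
    by (subst distr_distr) (auto simp: comp_def)
  also have "\<dots> = distr (density (distr ?L ?L (\<lambda>z. (fst z, snd z - fst z))) g) ?L ?T"
    using XN by (simp add: distributed_def distr_lborel_pair_shear)
  also have "\<dots> = density ?L (\<lambda>z. g (fst z, snd z - fst z))"
    by (subst distr_density_distr) (auto simp: comp_def)
  finally have "distr M ?L (\<lambda>\<omega>. (X \<omega>, X \<omega> + N \<omega>)) = density ?L (\<lambda>z. g (fst z, snd z - fst z))" .
  moreover have "(\<lambda>\<omega>. (X \<omega>, X \<omega> + N \<omega>)) \<in> measurable M ?L"
    using measurable_comp[of "\<lambda>\<omega>. (X \<omega>, N \<omega>)" M ?L ?T ?L] by (simp add: comp_def)
  ultimately show ?thesis
    unfolding distributed_def by simp
qed

lemma (in prob_space) mutual_information_borel_eq_lborel: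
  "mutual_information b borel borel X Y = mutual_information b lborel lborel X Y"
proof -
  have "distr M borel X = distr M lborel X" "distr M borel Y = distr M lborel Y"
    by (rule distr_cong; simp)+
  moreover have "distr M (borel \<Otimes>\<^sub>M borel) (\<lambda>x. (X x, Y x)) = distr M (lborel \<Otimes>\<^sub>M lborel) (\<lambda>x. (X x, Y x))"
    by (rule distr_cong) (auto intro!: sets_pair_measure_cong)
  ultimately show ?thesis
    unfolding mutual_information_def by simp
qed

lemma (in prob_space) distributed_nn_integral_density:
  "distributed M S X f \<Longrightarrow> (\<integral>\<^sup>+x. f x \<partial>S) = 1"
  using distributed_nn_integral[of M S X f "\<lambda>_. 1"] by (simp add: emeasure_space_1)

lemma diff_le_mult_ln_divide:
  fixes a b :: real
  assumes "0 \<le> a" and "0 < b"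
  shows "a - b \<le> a * ln (a / b)"
proof (cases "a = 0")
  case False
  with assms have "ln (b / a) \<le> b / a - 1"
    by (intro ln_le_minus_one) simp
  with False assms have "a * (- ln (a / b)) \<le> a * (b / a - 1)"
    by (intro mult_left_mono) (auto simp: ln_div)
  moreover have "a * (b / a - 1) = b - a"
    using False by (simp add: field_simps)
  ultimately show ?thesis
    by simp
qed (use assms in simp)

section \<open>Gaussian input through an additive noise channel\<close>

locale gaussian_input_channel = prob_space M
  for M :: "'a measure" +
  fixes X N :: "'a \<Rightarrow> real^'n" and v :: real and fN :: "real^'n \<Rightarrow> real" and B :: real
  assumes indep: "indep_var borel X borel N"
    and distributed_X: "distributed M lborel X (\<lambda>x. ennreal (gauss_density v x))"
    and distributed_N: "distributed M lborel N (\<lambda>n. ennreal (fN n))"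
    and fN_nonneg: "\<And>n. 0 \<le> fN n"
    and fN_le: "\<And>n. fN n \<le> B"
    and integrable_N_sq: "integrable M (\<lambda>\<omega>. (norm (N \<omega>))\<^sup>2)"
    and noise_small: "2 * expectation (\<lambda>\<omega>. (norm (N \<omega>))\<^sup>2) < v"
begin

abbreviation noise_power :: real where
  "noise_power \<equiv> expectation (\<lambda>\<omega>. (norm (N \<omega>))\<^sup>2)"

lemma v_pos: "0 < v"
proof -
  have "0 \<le> noise_power"
    by (intro integral_nonneg_AE) simp
  with noise_small show ?thesis
    by linarith
qed

lemma gauss_density_v_pos[simp]: "0 < gauss_density v x"
  using v_pos by (rule gauss_density_pos)

lemma measurable_X[measurable]: "X \<in> borel_measurable M"
  using distributed_measurable[OF distributed_X] by simp

lemma measurable_N[measurable]: "N \<in> borel_measurable M"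
  using distributed_measurable[OF distributed_N] by simp

lemma borel_measurable_fN[measurable]: "fN \<in> borel_measurable borel"
  using distributed_real_measurable[OF _ distributed_N] fN_nonneg by simp

definition joint_density :: "(real^'n) \<times> (real^'n) \<Rightarrow> real" where
  "joint_density z = gauss_density v (fst z) * fN (snd z - fst z)"

lemma joint_density_nonneg: "0 \<le> joint_density z"
  by (simp add: joint_density_def fN_nonneg)

lemma borel_measurable_joint_density[measurable]:
  "joint_density \<in> borel_measurable (lborel \<Otimes>\<^sub>M lborel)"
  unfolding joint_density_def[abs_def] by measurable

lemma distributed_joint:
  "distributed M (lborel \<Otimes>\<^sub>M lborel) (\<lambda>\<omega>. (X \<omega>, X \<omega> + N \<omega>)) (\<lambda>z. ennreal (joint_density z))"
proof -
  have "indep_var lborel X lborel N"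
    using indep by (simp add: indep_var_eq)
  then have "distributed M (lborel \<Otimes>\<^sub>M lborel) (\<lambda>\<omega>. (X \<omega>, N \<omega>))
      (\<lambda>(x, n). ennreal (gauss_density v x) * ennreal (fN n))"
    by (intro distributed_joint_indep lborel.sigma_finite_measure_axioms distributed_X distributed_N)
  from distributed_pair_add[OF this] show ?thesis
    by (simp add: joint_density_def ennreal_mult fN_nonneg split_beta')
qed

lemma has_bochner_integral_joint_density:
  assumes [measurable]: "g \<in> borel_measurable (lborel \<Otimes>\<^sub>M lborel)"
    and "integrable M (\<lambda>\<omega>. g (X \<omega>, X \<omega> + N \<omega>))"
  shows "has_bochner_integral (lborel \<Otimes>\<^sub>M lborel) (\<lambda>z. joint_density z * g z)
    (expectation (\<lambda>\<omega>. g (X \<omega>, X \<omega> + N \<omega>)))"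
  using assms distributed_integrable[OF distributed_joint] distributed_integral[OF distributed_joint]
  by (simp add: has_bochner_integral_iff joint_density_nonneg)

definition output_density :: "real^'n \<Rightarrow> real" where
  "output_density y = expectation (\<lambda>\<omega>. gauss_density v (y - N \<omega>))"

lemma integrable_gauss_density_minus_N: "integrable M (\<lambda>\<omega>. gauss_density v (y - N \<omega>))"
proof (rule integrable_const_bound)
  show "AE \<omega> in M. norm (gauss_density v (y - N \<omega>)) \<le> 1 / sqrt (2 * pi * v) ^ CARD('n)"
  proof (intro AE_I2)
    fix \<omega>
    show "norm (gauss_density v (y - N \<omega>)) \<le> 1 / sqrt (2 * pi * v) ^ CARD('n)"
      using gauss_density_le[OF v_pos, of "y - N \<omega>"] gauss_density_v_pos[of "y - N \<omega>"] by simp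
  qed
qed measurable

lemma output_density_eq_nn_integral:
  "ennreal (output_density y) = (\<integral>\<^sup>+x. joint_density (x, y) \<partial>lborel)"
proof -
  have "(\<integral>\<^sup>+x. joint_density (x, y) \<partial>lborel) = (\<integral>\<^sup>+n. joint_density (y - n, y) \<partial>lborel)"
    by (rule nn_integral_lborel_minus[symmetric, of "\<lambda>x. ennreal (joint_density (x, y))"]) measurable
  also have "\<dots> = (\<integral>\<^sup>+n. ennreal (fN n) * ennreal (gauss_density v (y - n)) \<partial>lborel)"
    by (simp add: joint_density_def ennreal_mult fN_nonneg mult.commute)
  also have "\<dots> = (\<integral>\<^sup>+\<omega>. ennreal (gauss_density v (y - N \<omega>)) \<partial>M)"
    by (rule distributed_nn_integral[OF distributed_N]) measurable
  also have "\<dots> = ennreal (output_density y)"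
    unfolding output_density_def using integrable_gauss_density_minus_N
    by (intro nn_integral_eq_integral) auto
  finally show ?thesis ..
qed

lemma distributed_output: "distributed M lborel (\<lambda>\<omega>. X \<omega> + N \<omega>) (\<lambda>y. ennreal (output_density y))"
  using distr_marginal2[OF lborel.sigma_finite_measure_axioms lborel.sigma_finite_measure_axioms distributed_joint]
  by (simp add: output_density_eq_nn_integral)

lemma output_density_ge:
  "exp (- (norm y)\<^sup>2 / v) / (2 * sqrt (2 * pi * v) ^ CARD('n)) \<le> output_density y"
proof -
  define e where "e = exp (- (norm y)\<^sup>2 / v) / sqrt (2 * pi * v) ^ CARD('n)"
  have "e / 2 \<le> e * (1 - noise_power / v)"
    using noise_small v_pos by (auto simp: e_def field_simps intro!: mult_left_mono)
  also have "\<dots> = expectation (\<lambda>\<omega>. e * (1 - (norm (N \<omega>))\<^sup>2 / v))"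
    using integrable_N_sq by (simp add: prob_space)
  also have "\<dots> \<le> output_density y"
    unfolding output_density_def e_def using integrable_N_sq integrable_gauss_density_minus_N
    by (intro integral_mono gauss_density_diff_ge v_pos) auto
  finally show ?thesis
    by (simp add: e_def)
qed

lemma output_density_pos: "0 < output_density y"
  by (rule less_le_trans[OF _ output_density_ge]) (use v_pos in simp)

lemma output_density_nonneg[simp]: "0 \<le> output_density y"
  using output_density_pos less_imp_le by blast

lemma borel_measurable_output_density[measurable]: "output_density \<in> borel_measurable borel"
  using distributed_real_measurable[OF _ distributed_output] by simp

definition information_density :: "(real^'n) \<times> (real^'n) \<Rightarrow> real" where
  "information_density z =
    joint_density z * ln (joint_density z / (gauss_density v (fst z) * output_density (snd z)))"

lemma mutual_information_eq_integral:
  "mutual_information (exp 1) borel borel X (\<lambda>\<omega>. X \<omega> + N \<omega>)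
    = integral\<^sup>L (lborel \<Otimes>\<^sub>M lborel) information_density"
proof -
  interpret information_space M "exp 1"
    by unfold_locales simp
  have "mutual_information (exp 1) lborel lborel X (\<lambda>\<omega>. X \<omega> + N \<omega>) = integral\<^sup>L (lborel \<Otimes>\<^sub>M lborel)
      (\<lambda>z. joint_density z * log (exp 1) (joint_density z / (gauss_density v (fst z) * output_density (snd z))))"
    by (rule mutual_information_distr[OF lborel.sigma_finite_measure_axioms lborel.sigma_finite_measure_axioms
          distributed_X _ distributed_output _ distributed_joint])
       (auto simp: joint_density_nonneg output_density_pos less_imp_le)
  then show ?thesis
    by (simp add: mutual_information_borel_eq_lborel information_density_def[abs_def] log_def)
qed

definition information_density_minorant :: "(real^'n) \<times> (real^'n) \<Rightarrow> real" where
  "information_density_minorant z =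
    joint_density z * (real CARD('n) / 2 * ln v - (norm (snd z - fst z))\<^sup>2 / 2 + 1)
    - output_density (snd z) * gauss_density 1 (fst z - snd z)"

definition information_density_majorant :: "(real^'n) \<times> (real^'n) \<Rightarrow> real" where
  "information_density_majorant z =
    joint_density z * (B + ln (2 * sqrt (2 * pi * v) ^ CARD('n)) + (norm (snd z))\<^sup>2 / v)"

lemma information_density_ge: "information_density_minorant z \<le> information_density z"
proof -
  obtain x y where z: "z = (x, y)"
    by (cases z)
  define a where "a = joint_density (x, y)"
  define G where "G = gauss_density 1 (x - y)"
  have a: "0 \<le> a" and G: "0 < G" and Py: "0 < output_density y"
    by (simp_all add: a_def G_def joint_density_nonneg gauss_density_pos output_density_pos)
  have split: "information_density z = a * ln (a / (output_density y * G)) + a * (ln G - ln (gauss_density v x))"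
  proof (cases "a = 0")
    case False
    with a G Py gauss_density_v_pos[of x] show ?thesis
      by (simp add: information_density_def z a_def[symmetric] ln_div ln_mult less_imp_neq[symmetric] algebra_simps)
  qed (simp add: information_density_def z a_def[symmetric])
  have "a - output_density y * G \<le> a * ln (a / (output_density y * G))"
    using a G Py by (intro diff_le_mult_ln_divide) auto
  moreover have "real CARD('n) / 2 * ln v - (norm (y - x))\<^sup>2 / 2 \<le> ln G - ln (gauss_density v x)"
    using ln_gauss_density_le[OF v_pos, of x] ln_gauss_density_1[of "x - y"]
    by (simp add: G_def norm_minus_commute algebra_simps)
  then have "a * (real CARD('n) / 2 * ln v - (norm (y - x))\<^sup>2 / 2) \<le> a * (ln G - ln (gauss_density v x))"
    using a by (rule mult_left_mono)
  ultimately show ?thesis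
    unfolding split information_density_minorant_def
    by (simp add: z a_def[symmetric] G_def[symmetric] algebra_simps)
qed

lemma ln_output_density_ge:
  "- ln (2 * sqrt (2 * pi * v) ^ CARD('n)) - (norm y)\<^sup>2 / v \<le> ln (output_density y)"
proof -
  have "ln (exp (- (norm y)\<^sup>2 / v) / (2 * sqrt (2 * pi * v) ^ CARD('n))) \<le> ln (output_density y)"
    using output_density_ge[of y] output_density_pos[of y] v_pos by (subst ln_le_cancel_iff) auto
  then show ?thesis
    using v_pos by (simp add: ln_div)
qed

lemma information_density_le: "information_density z \<le> information_density_majorant z"
proof -
  obtain x y where z: "z = (x, y)"
    by (cases z)
  show ?thesis
  proof (cases "fN (y - x) = 0")
    case False
    then have f: "0 < fN (y - x)"
      using fN_nonneg[of "y - x"] by simp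
    have "ln (fN (y - x)) \<le> B"
      using ln_le_minus_one[OF f] fN_le[of "y - x"] by simp
    then have "ln (fN (y - x) / output_density y) \<le> B + ln (2 * sqrt (2 * pi * v) ^ CARD('n)) + (norm y)\<^sup>2 / v"
      using ln_output_density_ge[of y] f output_density_pos[of y] by (simp add: ln_div)
    then show ?thesis
      using f gauss_density_v_pos[of x]
      by (simp add: information_density_def information_density_majorant_def joint_density_def z
          mult_left_mono less_imp_neq[symmetric])
  qed (simp add: information_density_def information_density_majorant_def joint_density_def z)
qed

lemma nn_integral_output_density_kernel:
  "(\<integral>\<^sup>+z. ennreal (output_density (snd z) * gauss_density 1 (fst z - snd z)) \<partial>(lborel \<Otimes>\<^sub>M lborel)) = 1"
proof -
  have "(\<integral>\<^sup>+z. ennreal (output_density (snd z) * gauss_density 1 (fst z - snd z)) \<partial>(lborel \<Otimes>\<^sub>M lborel))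
      = (\<integral>\<^sup>+y. \<integral>\<^sup>+x. ennreal (output_density y) * ennreal (gauss_density 1 (- y + x)) \<partial>lborel \<partial>lborel)"
    by (subst lborel_pair.nn_integral_snd[symmetric]) (auto simp: ennreal_mult)
  also have "\<dots> = (\<integral>\<^sup>+y. ennreal (output_density y) \<partial>lborel)"
  proof (intro nn_integral_cong)
    fix y :: "real^'n"
    show "(\<integral>\<^sup>+x. ennreal (output_density y) * ennreal (gauss_density 1 (- y + x)) \<partial>lborel)
        = ennreal (output_density y)"
      using nn_integral_lborel_add[of "\<lambda>x. ennreal (gauss_density 1 x)" "- y"] nn_integral_gauss_density[of 1, where 'n='n]
      by (simp add: nn_integral_cmult)
  qed
  also have "\<dots> = 1"
    using distributed_output by (rule distributed_nn_integral_density)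
  finally show ?thesis .
qed

lemma has_bochner_integral_minorant:
  "has_bochner_integral (lborel \<Otimes>\<^sub>M lborel) information_density_minorant
    (real CARD('n) / 2 * ln v - noise_power / 2)"
proof -
  define K where "K = real CARD('n) / 2 * ln v"
  have "has_bochner_integral (lborel \<Otimes>\<^sub>M lborel)
      (\<lambda>z. joint_density z * (K - (norm (snd z - fst z))\<^sup>2 / 2 + 1))
      (expectation (\<lambda>\<omega>. K - (norm (N \<omega>))\<^sup>2 / 2 + 1))"
    using has_bochner_integral_joint_density[of "\<lambda>z. K - (norm (snd z - fst z))\<^sup>2 / 2 + 1"]
      integrable_N_sq by simp
  moreover have "expectation (\<lambda>\<omega>. K - (norm (N \<omega>))\<^sup>2 / 2 + 1) = K - noise_power / 2 + 1"
    using integrable_N_sq by (simp add: prob_space)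
  moreover have "has_bochner_integral (lborel \<Otimes>\<^sub>M lborel)
      (\<lambda>z. output_density (snd z) * gauss_density 1 (fst z - snd z)) 1"
    using nn_integral_output_density_kernel by (intro has_bochner_integral_nn_integral) auto
  ultimately show ?thesis
    unfolding information_density_minorant_def[abs_def] K_def[symmetric]
    using has_bochner_integral_diff by fastforce
qed

lemma integrable_norm_output_sq: "integrable M (\<lambda>\<omega>. (norm (X \<omega> + N \<omega>))\<^sup>2)"
proof (rule Bochner_Integration.integrable_bound)
  have "integrable lborel (\<lambda>x::real^'n. gauss_density v x * (norm x)\<^sup>2)"
    using v_pos by (rule integrable_gauss_density_mult_norm_sq)
  then have "integrable M (\<lambda>\<omega>. (norm (X \<omega>))\<^sup>2)"
    using distributed_integrable[OF distributed_X, of "\<lambda>x. (norm x)\<^sup>2"] by simp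
  with integrable_N_sq show "integrable M (\<lambda>\<omega>. 2 * (norm (X \<omega>))\<^sup>2 + 2 * (norm (N \<omega>))\<^sup>2)"
    by auto
  show "AE \<omega> in M. norm ((norm (X \<omega> + N \<omega>))\<^sup>2) \<le> norm (2 * (norm (X \<omega>))\<^sup>2 + 2 * (norm (N \<omega>))\<^sup>2)"
  proof (intro AE_I2)
    fix \<omega>
    have "(norm (X \<omega> + N \<omega>))\<^sup>2 \<le> (norm (X \<omega>) + norm (N \<omega>))\<^sup>2"
      using norm_triangle_ineq[of "X \<omega>" "N \<omega>"] by (intro power_mono) auto
    also have "\<dots> \<le> 2 * (norm (X \<omega>))\<^sup>2 + 2 * (norm (N \<omega>))\<^sup>2"
      using zero_le_power2[of "norm (X \<omega>) - norm (N \<omega>)"] by (simp add: power2_eq_square algebra_simps)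
    finally show "norm ((norm (X \<omega> + N \<omega>))\<^sup>2) \<le> norm (2 * (norm (X \<omega>))\<^sup>2 + 2 * (norm (N \<omega>))\<^sup>2)"
      by simp
  qed
qed measurable

lemma integrable_majorant: "integrable (lborel \<Otimes>\<^sub>M lborel) information_density_majorant"
proof -
  have "integrable M (\<lambda>\<omega>. B + ln (2 * sqrt (2 * pi * v) ^ CARD('n)) + (norm (X \<omega> + N \<omega>))\<^sup>2 / v)"
    using integrable_norm_output_sq by auto
  then show ?thesis
    unfolding information_density_majorant_def[abs_def]
    using has_bochner_integral_joint_density[of "\<lambda>z. B + ln (2 * sqrt (2 * pi * v) ^ CARD('n)) + (norm (snd z))\<^sup>2 / v"]
    by (simp add: has_bochner_integral_iff)
qed

lemma integrable_information_density: "integrable (lborel \<Otimes>\<^sub>M lborel) information_density"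
proof (rule Bochner_Integration.integrable_bound)
  show "integrable (lborel \<Otimes>\<^sub>M lborel)
      (\<lambda>z. \<bar>information_density_minorant z\<bar> + \<bar>information_density_majorant z\<bar>)"
    using has_bochner_integral_minorant integrable_majorant
    by (intro Bochner_Integration.integrable_add integrable_abs) (auto simp: has_bochner_integral_iff)
  show "AE z in lborel \<Otimes>\<^sub>M lborel. norm (information_density z)
      \<le> norm (\<bar>information_density_minorant z\<bar> + \<bar>information_density_majorant z\<bar>)"
  proof (intro AE_I2)
    fix z
    show "norm (information_density z)
        \<le> norm (\<bar>information_density_minorant z\<bar> + \<bar>information_density_majorant z\<bar>)"
      using information_density_ge[of z] information_density_le[of z] by (simp only: real_norm_def)
  qed
qed (simp add: information_density_def[abs_def])

lemma mutual_information_ge: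
  "real CARD('n) / 2 * ln v - noise_power / 2 \<le> mutual_information (exp 1) borel borel X (\<lambda>\<omega>. X \<omega> + N \<omega>)"
proof -
  have "integral\<^sup>L (lborel \<Otimes>\<^sub>M lborel) information_density_minorant
      \<le> integral\<^sup>L (lborel \<Otimes>\<^sub>M lborel) information_density"
    using has_bochner_integral_minorant integrable_information_density information_density_ge
    by (intro integral_mono) (auto simp: has_bochner_integral_iff)
  then show ?thesis
    using has_bochner_integral_minorant
    by (simp add: mutual_information_eq_integral has_bochner_integral_integral_eq)
qed

end

theorem lemma6:
  fixes lam u :: real
  assumes "lam > 0" and "u > 0"
  shows "\<exists>c::real. \<forall>\<^sub>F P in at_top.
    \<forall>(M::'a measure) (X::'a \<Rightarrow> real^'n) (N::'a \<Rightarrow> real^'n).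
      prob_space M \<and>
      prob_space.indep_var M borel X borel N \<and>
      distributed M lborel X (\<lambda>x. ennreal (gauss_density (P / real CARD('n)) x)) \<and>
      distributed M lborel N (\<lambda>n. ennreal (ndfhl_density (CARD('n) + 1) lam u n))
      \<longrightarrow> prob_space.mutual_information M (exp 1) borel borel X (\<lambda>\<omega>. X \<omega> + N \<omega>)
            \<ge> real CARD('n) / 2 * ln P - c"
proof -
  let ?p = "real CARD('n)"
  define m2 where "m2 = (\<integral>n. ndfhl_density (CARD('n) + 1) lam u n * (norm (n::real^'n))\<^sup>2 \<partial>lborel)"
  obtain B where B: "\<And>n::real^'n. ndfhl_density (CARD('n) + 1) lam u n \<le> B"
    using ndfhl_density_bounded[OF assms] by blast
  have "0 \<le> m2"
    unfolding m2_def using ndfhl_density_nonneg[OF assms, where 'n='n] by (simp add: integral_nonneg_AE)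
  show ?thesis
  proof (intro exI[of _ "?p / 2 * ln ?p + m2 / 2"] allI impI
      eventually_mono[OF eventually_gt_at_top[of "2 * ?p * m2"]])
    fix P :: real and M :: "'a measure" and X N :: "'a \<Rightarrow> real^'n"
    assume P: "2 * ?p * m2 < P"
      and H: "prob_space M \<and> prob_space.indep_var M borel X borel N \<and>
        distributed M lborel X (\<lambda>x. ennreal (gauss_density (P / ?p) x)) \<and>
        distributed M lborel N (\<lambda>n. ennreal (ndfhl_density (CARD('n) + 1) lam u n))"
    then interpret prob_space M
      by blast
    from H have N: "distributed M lborel N (\<lambda>n. ennreal (ndfhl_density (CARD('n) + 1) lam u n))"
      by blast
    note N_sq = ndfhl_distributed_second_moment[OF assms N]
    have noise: "2 * expectation (\<lambda>\<omega>. (norm (N \<omega>))\<^sup>2) < P / ?p"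
      using N_sq(2) P by (simp add: m2_def field_simps)
    interpret gaussian_input_channel M X N "P / ?p" "ndfhl_density (CARD('n) + 1) lam u" B
      by unfold_locales (use H N B N_sq(1) noise ndfhl_density_nonneg[OF assms, where 'n='n] in fast)+
    have "0 \<le> 2 * ?p * m2"
      using \<open>0 \<le> m2\<close> by simp
    with P have "0 < P"
      by linarith
    then have "?p / 2 * ln P - (?p / 2 * ln ?p + m2 / 2) = ?p / 2 * ln (P / ?p) - noise_power / 2"
      using N_sq(2) by (simp add: m2_def ln_div field_simps)
    also have "\<dots> \<le> mutual_information (exp 1) borel borel X (\<lambda>\<omega>. X \<omega> + N \<omega>)"
      by (rule mutual_information_ge)
    finally show "?p / 2 * ln P - (?p / 2 * ln ?p + m2 / 2)
        \<le> mutual_information (exp 1) borel borel X (\<lambda>\<omega>. X \<omega> + N \<omega>)" .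
  qed
qed

end
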